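(* Let $K$ be a finite field of characteristic $p$, let $d$ be an integer with $\gcd(d,|K|-1)=1$, and let $\sigma\in\mathrm{Gal}(\mathbb{Q}(\zeta_p)/\mathbb{Q})$ be such that $\sigma$ does not fix every value $W_{K,d}(a)$, $a\in K^\times$. Then $$\sum_{a\in K^\times}W_{K,d}(a)\,\sigma\big(W_{K,d}(a)\big)=0.$$
   Context: $\zeta_p$ is a primitive $p$th root of unity over $\mathbb{Q}$. $\psi_K(x)=\exp(2\pi i\,\mathrm{Tr}_{K/\mathbb{F}_p}(x)/p)$ and $W_{K,d}(a)=\sum_{x\in K}\psi_K(x^d+ax)\in\mathbb{Q}(\zeta_p)$. *)

theory Defs
  imports "HOL-Analysis.Analysis"
begin

definition ff_degree :: "'a::{field,finite} itself \<Rightarrow> nat" where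
  "ff_degree _ = (THE n. CARD('a) = CHAR('a) ^ n)"

definition abs_trace :: "'a::{field,finite} \<Rightarrow> 'a" where
  "abs_trace x = (\<Sum>i<ff_degree TYPE('a). x ^ (CHAR('a) ^ i))"

definition trace_nat :: "'a::{field,finite} \<Rightarrow> nat" where
  "trace_nat x = (THE k. k < CHAR('a) \<and> of_nat k = abs_trace x)"

definition psi :: "'a::{field,finite} \<Rightarrow> complex" where
  "psi x = exp (2 * pi * \<i> * of_nat (trace_nat x) / of_nat CHAR('a))"

text \<open>Weil sum W_{K,d}(a) = sum_{x in K} psi(x^d + a x); x^d for integer d uses
power_int (with the convention 0^d = 0 for d < 0).\<close>
definition weil_sum :: "int \<Rightarrow> 'a::{field,finite} \<Rightarrow> complex" where
  "weil_sum d a = (\<Sum>x\<in>UNIV. psi (power_int x d + a * x))"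

definition zeta :: "nat \<Rightarrow> complex" where
  "zeta p = exp (2 * pi * \<i> / of_nat p)"

definition cyclotomic_field :: "nat \<Rightarrow> complex set" where
  "cyclotomic_field p = {z. \<exists>c :: nat \<Rightarrow> rat. z = (\<Sum>k<p. of_rat (c k) * zeta p ^ k)}"

text \<open>sigma in Gal(Q(zeta_p)/Q): a field automorphism of Q(zeta_p)
(every ring automorphism fixes Q).  sigma is given as a function on C;
only its restriction to Q(zeta_p) matters.\<close>
definition galois_cyclo :: "nat \<Rightarrow> (complex \<Rightarrow> complex) \<Rightarrow> bool" where
  "galois_cyclo p \<sigma> \<longleftrightarrow>
     bij_betw \<sigma> (cyclotomic_field p) (cyclotomic_field p) \<and>
     \<sigma> 1 = 1 \<and>
     (\<forall>x\<in>cyclotomic_field p. \<forall>y\<in>cyclotomic_field p.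
         \<sigma> (x + y) = \<sigma> x + \<sigma> y \<and> \<sigma> (x * y) = \<sigma> x * \<sigma> y)"

end

(*
  The automorphism sigma sends zeta_p to zeta_p^k with p not dividing k, hence
  sigma(psi(x)) = psi(c x) for c = k in F_p^*, and sigma(W(a)) = sum_x psi(c (x^d + a x)).
  If c^d = c, the substitution x -> c x shows that sigma fixes every W(a); so c^d <> c,
  which forces p, and then d, to be odd.  Expanding sum_a W(a) sigma(W(a)) as a triple sum
  and summing the character over a leaves only the terms x = -c y, giving
  |K| sum_y psi((c - c^d) y^d).  As x -> x^d permutes K (gcd(d, |K| - 1) = 1) and
  c - c^d <> 0, this is |K| sum_y psi(y) = 0.  Finally W(0) = sum_x psi(x^d) = 0 as well,
  so the term a = 0 may be dropped.
*)
theory Submission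
  imports Defs "HOL-Algebra.Sylow"
    "HOL-Decision_Procs.Algebra_Aux" "HOL-Computational_Algebra.Computational_Algebra"
    "HOL-Number_Theory.Cong"
begin

section \<open>Finite fields\<close>

lemma prime_CHAR_finite: "prime CHAR('a::{field,finite})"
  by (intro prime_CHAR_semidom finite_imp_CHAR_pos) simp

lemma CHAR_gt_one: "CHAR('a::{field,finite}) > 1"
  using prime_CHAR_finite prime_gt_1_nat by blast

lemma Units_cring_class_ops: "Units (cring_class_ops :: 'a::field ring) = - {0}"
  by (auto simp: Units_def class_simps field_simps intro!: bexI[of _ "inverse x" for x])

lemma power_card_minus_one_eq_one:
  fixes x :: "'a::{field,finite}"
  assumes "x \<noteq> 0"
  shows "x ^ (CARD('a) - 1) = 1"
proof -
  have "x ^ card (Units (cring_class_ops :: 'a ring)) = 1"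
    by (rule cring_class.units_power_order_eq_one) (simp_all add: Units_cring_class_ops assms)
  then show ?thesis
    by (simp add: Units_cring_class_ops Compl_eq_Diff_UNIV card_Diff_singleton)
qed

lemma power_card_eq_self: "(x::'a::{field,finite}) ^ CARD('a) = x"
proof (cases "x = 0")
  case False
  have "x ^ CARD('a) = x * x ^ (CARD('a) - 1)"
    using finite_UNIV_card_ge_0[where 'a='a] by (simp flip: power_Suc)
  also have "\<dots> = x"
    by (simp only: power_card_minus_one_eq_one[OF False] mult_1_right)
  finally show ?thesis .
qed simp

text \<open>Cauchy's theorem (via Sylow) gives an additive subgroup of order \<open>r\<close>; a nonzero
  element \<open>x\<close> of it satisfies \<open>r x = 0\<close>, so \<open>r = 0\<close> in the field.\<close>

lemma prime_dvd_card_imp_eq_CHAR: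
  assumes r: "prime r" "r dvd CARD('a::{field,finite})"
  shows "r = CHAR('a)"
proof -
  let ?G = "add_monoid (cring_class_ops :: 'a ring)"
  have G: "group ?G"
    by (rule abelian_group.a_group[OF ring.is_abelian_group[OF cring.axioms(1)[OF cring_class]]])
  obtain m where "CARD('a) = r * m"
    using r by blast
  then have "order ?G = r ^ 1 * m"
    by (simp add: order_def cring_class_ops_def)
  from sylow_thm[OF r(1) G this] obtain H where H: "subgroup H ?G" "card H = r"
    by (auto simp: cring_class_ops_def)
  then have "H \<noteq> {0}"
    using prime_gt_1_nat[OF r(1)] by auto
  moreover have "0 \<in> H"
    using subgroup.one_closed[OF H(1)] by (simp add: cring_class_ops_def)
  ultimately obtain x where x: "x \<in> H" "x \<noteq> 0"
    by blast
  have "comm_group (?G\<lparr>carrier := H\<rparr>)"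
    by (rule group.group_comm_groupI[OF subgroup.subgroup_is_group[OF H(1) G]])
      (simp add: cring_class_ops_def add.commute)
  then have "x [^]\<^bsub>?G\<lparr>carrier := H\<rparr>\<^esub> card (carrier (?G\<lparr>carrier := H\<rparr>))
      = \<one>\<^bsub>?G\<lparr>carrier := H\<rparr>\<^esub>"
    by (rule comm_group.power_order_eq_one) (simp_all add: x(1))
  moreover have "x [^]\<^bsub>?G\<lparr>carrier := H\<rparr>\<^esub> n = of_nat n * x" for n
    by (induction n) (simp_all add: cring_class_ops_def algebra_simps)
  ultimately have "of_nat r * x = 0"
    by (simp add: H(2) cring_class_ops_def)
  then have "CHAR('a) dvd r"
    using x(2) by (simp add: of_nat_eq_0_iff_char_dvd)
  then show ?thesis
    using primes_dvd_imp_eq[OF prime_CHAR_finite[where 'a='a] r(1)] by simp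
qed

lemma card_eq_CHAR_power: "CARD('a::{field,finite}) = CHAR('a) ^ multiplicity CHAR('a) CARD('a)"
proof -
  let ?p = "CHAR('a)" and ?q = "CARD('a)"
  have "prime_factors ?q \<subseteq> {?p}"
    using prime_dvd_card_imp_eq_CHAR by (auto simp: in_prime_factors_iff)
  then have "(\<Prod>r\<in>prime_factors ?q. r ^ multiplicity r ?q) = (\<Prod>r\<in>{?p}. r ^ multiplicity r ?q)"
    by (intro prod.mono_neutral_left)
      (auto simp: in_prime_factors_iff prime_CHAR_finite not_dvd_imp_multiplicity_0)
  then show ?thesis
    using prod_prime_factors[of ?q] by simp
qed

lemma card_eq_CHAR_power_ff_degree: "CARD('a) = CHAR('a) ^ ff_degree TYPE('a::{field,finite})"
proof -
  have "\<exists>!n. CARD('a) = CHAR('a) ^ n"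
    using card_eq_CHAR_power[where 'a='a] CHAR_gt_one[where 'a='a] by (metis power_inject_exp)
  then show ?thesis
    unfolding ff_degree_def by (rule theI')
qed

lemma ff_degree_pos: "ff_degree TYPE('a::{field,finite}) > 0"
proof (rule ccontr)
  assume "\<not> ?thesis"
  then have "CARD('a) = 1"
    using card_eq_CHAR_power_ff_degree[where 'a='a] by simp
  moreover have "card {0::'a, 1} \<le> CARD('a)"
    by (rule card_mono) auto
  ultimately show False
    by simp
qed

section \<open>The absolute trace\<close>

lemma abs_trace_add: "abs_trace (x + y) = abs_trace x + abs_trace (y::'a::{field,finite})"
  unfolding abs_trace_def by (simp add: freshmans_dream'[OF prime_CHAR_finite refl] sum.distrib)

lemma abs_trace_zero: "abs_trace (0::'a::{field,finite}) = 0"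
  unfolding abs_trace_def using CHAR_gt_one[where 'a='a] by (simp add: zero_power)

lemma abs_trace_power_CHAR: "abs_trace (x::'a::{field,finite}) ^ CHAR('a) = abs_trace x"
proof -
  let ?n = "ff_degree TYPE('a)" and ?p = "CHAR('a)"
  have "abs_trace x ^ ?p = (\<Sum>i<?n. (x ^ (?p ^ i)) ^ ?p)"
    unfolding abs_trace_def by (rule freshmans_dream_sum[OF prime_CHAR_finite refl])
  also have "\<dots> = (\<Sum>i<?n. x ^ (?p ^ Suc i))"
    by (simp add: power_mult[symmetric] mult.commute)
  also have "\<dots> = (\<Sum>i<Suc ?n. x ^ (?p ^ i)) - x"
    by (subst sum.lessThan_Suc_shift) simp
  also have "\<dots> = abs_trace x"
    by (simp add: abs_trace_def card_eq_CHAR_power_ff_degree[symmetric] power_card_eq_self)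
  finally show ?thesis .
qed

lemma of_nat_power_CHAR: "(of_nat k :: 'a::{field,finite}) ^ CHAR('a) = of_nat k"
proof (induction k)
  case 0
  then show ?case
    using CHAR_gt_one[where 'a='a] by simp
next
  case (Suc k)
  then show ?case
    by (simp add: freshmans_dream[OF prime_CHAR_finite refl])
qed

text \<open>The fixed points of the Frobenius map are the roots of \<open>X\<^sup>p - X\<close>; the \<open>p\<close>
  elements of the prime field already exhaust them.\<close>

lemma power_CHAR_eq_self_imp_of_nat:
  assumes "(y::'a::{field,finite}) ^ CHAR('a) = y"
  shows "\<exists>k<CHAR('a). of_nat k = y"
proof -
  let ?p = "CHAR('a)"
  define P :: "'a poly" where "P = monom 1 ?p - monom 1 1"
  have "coeff P ?p = 1"
    using CHAR_gt_one[where 'a='a] by (simp add: P_def)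
  then have "P \<noteq> 0"
    by auto
  moreover have "degree P \<le> ?p"
    unfolding P_def using CHAR_gt_one[where 'a='a]
    by (intro degree_diff_le) (auto intro: order.trans[OF degree_monom_le])
  ultimately have roots: "card {x. poly P x = 0} \<le> ?p"
    using card_poly_roots_bound by fastforce
  have "inj_on (of_nat :: nat \<Rightarrow> 'a) {..<?p}"
    by (auto simp: inj_on_def of_nat_eq_iff_cong_CHAR intro: cong_less_modulus_unique_nat)
  then have "card (of_nat ` {..<?p} :: 'a set) = ?p"
    by (simp add: card_image)
  moreover have "of_nat ` {..<?p} \<subseteq> {x. poly P x = 0}"
    by (auto simp: P_def poly_monom of_nat_power_CHAR)
  ultimately have "of_nat ` {..<?p} = {x. poly P x = 0}"
    using roots by (intro card_seteq) auto
  moreover have "poly P y = 0"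
    using assms by (simp add: P_def poly_monom)
  ultimately show ?thesis
    by (metis (mono_tags, lifting) imageE lessThan_iff mem_Collect_eq)
qed

lemma trace_nat_less: "trace_nat (x::'a::{field,finite}) < CHAR('a)"
  and of_nat_trace_nat: "of_nat (trace_nat x) = abs_trace x"
proof -
  have "\<exists>!k. k < CHAR('a) \<and> of_nat k = abs_trace x"
    using power_CHAR_eq_self_imp_of_nat[OF abs_trace_power_CHAR[of x]]
    by (metis of_nat_eq_iff_cong_CHAR cong_less_modulus_unique_nat)
  then have "trace_nat x < CHAR('a) \<and> of_nat (trace_nat x) = abs_trace x"
    unfolding trace_nat_def by (rule theI')
  then show "trace_nat x < CHAR('a)" "of_nat (trace_nat x) = abs_trace x"
    by simp_all
qed

text \<open>As a polynomial in \<open>x\<close> the trace has degree \<open>p^(n-1) < p^n = |K|\<close>, so it cannot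
  vanish on all of \<open>K\<close>.\<close>

lemma ex_abs_trace_nonzero: "\<exists>b::'a::{field,finite}. abs_trace b \<noteq> 0"
proof (rule ccontr)
  assume "\<not> ?thesis"
  then have all: "abs_trace b = 0" for b :: 'a
    by blast
  let ?p = "CHAR('a)" and ?n = "ff_degree TYPE('a)"
  define Q :: "'a poly" where "Q = (\<Sum>i<?n. monom 1 (?p ^ i))"
  have poly_Q: "poly Q x = abs_trace x" for x
    by (simp add: Q_def poly_sum poly_monom abs_trace_def)
  have n: "?n - 1 < ?n"
    using ff_degree_pos[where 'a='a] by simp
  have "coeff Q (?p ^ (?n - 1)) = (\<Sum>i\<in>{?n - 1}. 1)"
    unfolding Q_def coeff_sum coeff_monom
    using n CHAR_gt_one[where 'a='a] by (intro sum.mono_neutral_cong_right) auto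
  then have "Q \<noteq> 0"
    by auto
  have "degree Q \<le> ?p ^ (?n - 1)"
    unfolding Q_def using CHAR_gt_one[where 'a='a]
    by (intro degree_sum_le) (auto intro!: order.trans[OF degree_monom_le] power_increasing)
  also have "\<dots> < ?p ^ ?n"
    using CHAR_gt_one[where 'a='a] n by (intro power_strict_increasing) auto
  also have "\<dots> = card {x::'a. poly Q x = 0}"
    by (simp add: poly_Q all card_eq_CHAR_power_ff_degree[symmetric])
  finally show False
    using card_poly_roots_bound[OF \<open>Q \<noteq> 0\<close>] by linarith
qed

section \<open>The canonical additive character\<close>

lemma zeta_power: "n > 0 \<Longrightarrow> zeta n ^ j = exp (2 * of_real pi * \<i> * of_nat j / of_nat n)"
  unfolding zeta_def by (simp add: exp_of_nat_mult[symmetric] mult_ac)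

lemma zeta_power_eq_iff: "n > 0 \<Longrightarrow> zeta n ^ a = zeta n ^ b \<longleftrightarrow> a mod n = b mod n"
  using complex_root_unity_eq[of n a b] by (simp add: zeta_power)

lemma psi_eq_zeta_power: "psi (x::'a::{field,finite}) = zeta CHAR('a) ^ trace_nat x"
  using CHAR_gt_one[where 'a='a] by (simp add: psi_def zeta_power)

lemma psi_eq_zeta_powerI:
  assumes "abs_trace (x::'a::{field,finite}) = of_nat k"
  shows "psi x = zeta CHAR('a) ^ k"
proof -
  have "trace_nat x mod CHAR('a) = k mod CHAR('a)"
    using assms by (simp flip: of_nat_trace_nat add: of_nat_eq_iff_cong_CHAR cong_def)
  then show ?thesis
    using CHAR_gt_one[where 'a='a] by (simp add: psi_eq_zeta_power zeta_power_eq_iff)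
qed

lemma psi_add: "psi ((x::'a::{field,finite}) + y) = psi x * psi y"
proof -
  have "abs_trace (x + y) = of_nat (trace_nat x + trace_nat y)"
    by (simp add: abs_trace_add of_nat_trace_nat)
  from psi_eq_zeta_powerI[OF this] show ?thesis
    by (simp add: psi_eq_zeta_power power_add)
qed

lemma psi_zero: "psi (0::'a::{field,finite}) = 1"
  using psi_eq_zeta_powerI[of 0 0] by (simp add: abs_trace_zero)

lemma psi_of_nat_mult: "psi (of_nat k * (x::'a::{field,finite})) = psi x ^ k"
  by (induction k) (simp_all add: psi_zero psi_add distrib_right)

lemma psi_eq_one_iff: "psi (x::'a::{field,finite}) = 1 \<longleftrightarrow> abs_trace x = 0"
proof -
  have "psi x = 1 \<longleftrightarrow> trace_nat x mod CHAR('a) = 0 mod CHAR('a)"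
    using CHAR_gt_one[where 'a='a] zeta_power_eq_iff[of "CHAR('a)" "trace_nat x" 0]
    by (simp add: psi_eq_zeta_power)
  also have "\<dots> \<longleftrightarrow> abs_trace x = 0"
    by (simp flip: of_nat_trace_nat add: trace_nat_less of_nat_eq_0_iff_char_dvd dvd_eq_mod_eq_0)
  finally show ?thesis .
qed

lemma sum_psi: "(\<Sum>x\<in>UNIV. psi (x::'a::{field,finite})) = 0"
proof -
  let ?S = "\<Sum>x\<in>UNIV. psi (x::'a)"
  obtain b :: 'a where "abs_trace b \<noteq> 0"
    using ex_abs_trace_nonzero by blast
  then have "psi b \<noteq> 1"
    by (simp add: psi_eq_one_iff)
  have "?S = (\<Sum>x\<in>UNIV. psi (b + x))"
    by (rule sum.reindex_bij_witness[of _ "\<lambda>x. b + x" "\<lambda>x. x - b"]) auto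
  also have "\<dots> = psi b * ?S"
    by (simp add: psi_add sum_distrib_left)
  finally show ?thesis
    using \<open>psi b \<noteq> 1\<close> by (metis mult_cancel_right2)
qed

lemma sum_psi_mult:
  "(\<Sum>a\<in>UNIV. psi (a * (z::'a::{field,finite}))) = (if z = 0 then of_nat CARD('a) else 0)"
proof (cases "z = 0")
  case False
  have "(\<Sum>a\<in>UNIV. psi (a * z)) = (\<Sum>x\<in>UNIV. psi (x::'a))"
    by (rule sum.reindex_bij_witness[of _ "\<lambda>x. x / z" "\<lambda>a. a * z"]) (use False in auto)
  with False show ?thesis
    by (simp add: sum_psi)
qed (simp add: psi_zero)

section \<open>Automorphisms of the cyclotomic field\<close>

lemma zeta_power_in_cyclotomic_field:
  assumes "n > 0"
  shows "zeta n ^ j \<in> cyclotomic_field n"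
proof -
  define c :: "nat \<Rightarrow> rat" where "c k = (if k = j mod n then 1 else 0)" for k
  have "(\<Sum>k<n. of_rat (c k) * zeta n ^ k) = zeta n ^ (j mod n)"
    using assms by (subst sum.mono_neutral_cong_right[of _ "{j mod n}"]) (auto simp: c_def)
  also have "\<dots> = zeta n ^ j"
    using assms by (simp add: zeta_power_eq_iff)
  finally show ?thesis
    unfolding cyclotomic_field_def by (auto intro!: exI[of _ c])
qed

lemma zero_in_cyclotomic_field: "0 \<in> cyclotomic_field n"
  unfolding cyclotomic_field_def by (auto intro!: exI[of _ "\<lambda>_. 0"])

lemma add_in_cyclotomic_field:
  assumes "x \<in> cyclotomic_field n" "y \<in> cyclotomic_field n"
  shows "x + y \<in> cyclotomic_field n"
proof -
  obtain c c' where "x = (\<Sum>k<n. of_rat (c k) * zeta n ^ k)" "y = (\<Sum>k<n. of_rat (c' k) * zeta n ^ k)"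
    using assms unfolding cyclotomic_field_def by blast
  then have "x + y = (\<Sum>k<n. of_rat (c k + c' k) * zeta n ^ k)"
    by (simp add: sum.distrib of_rat_add distrib_right)
  then show ?thesis
    unfolding cyclotomic_field_def by (auto intro!: exI[of _ "\<lambda>k. c k + c' k"])
qed

lemma sum_in_cyclotomic_field:
  "(\<And>a. a \<in> A \<Longrightarrow> f a \<in> cyclotomic_field n) \<Longrightarrow> sum f A \<in> cyclotomic_field n"
  by (induction A rule: infinite_finite_induct)
    (auto simp: zero_in_cyclotomic_field add_in_cyclotomic_field)

context
  fixes n :: nat and \<sigma> :: "complex \<Rightarrow> complex"
  assumes galois: "galois_cyclo n \<sigma>" and n: "n > 1"
begin

lemma galois_cyclo_zero: "\<sigma> 0 = 0"
  using galois zero_in_cyclotomic_field unfolding galois_cyclo_def by (metis add_cancel_right_right)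

lemma galois_cyclo_sum:
  "(\<And>a. a \<in> A \<Longrightarrow> f a \<in> cyclotomic_field n) \<Longrightarrow> \<sigma> (sum f A) = (\<Sum>a\<in>A. \<sigma> (f a))"
  by (induction A rule: infinite_finite_induct)
    (use galois in \<open>auto simp: galois_cyclo_zero galois_cyclo_def sum_in_cyclotomic_field\<close>)

lemma zeta_in_cyclotomic_field: "zeta n \<in> cyclotomic_field n"
  using zeta_power_in_cyclotomic_field[of n 1] n by simp

lemma galois_cyclo_zeta_power: "\<sigma> (zeta n ^ j) = \<sigma> (zeta n) ^ j"
proof (induction j)
  case 0
  then show ?case
    using galois by (simp add: galois_cyclo_def)
next
  case (Suc j)
  have "zeta n ^ j \<in> cyclotomic_field n"
    using n by (simp add: zeta_power_in_cyclotomic_field)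
  then have "\<sigma> (zeta n * zeta n ^ j) = \<sigma> (zeta n) * \<sigma> (zeta n ^ j)"
    using galois zeta_in_cyclotomic_field by (simp add: galois_cyclo_def)
  then show ?case
    using Suc by simp
qed

lemma galois_cyclo_zeta_eq_power: "\<exists>k. 0 < k \<and> k < n \<and> \<sigma> (zeta n) = zeta n ^ k"
proof -
  have "\<sigma> (zeta n) ^ n = \<sigma> (zeta n ^ n)"
    by (simp add: galois_cyclo_zeta_power)
  also have "zeta n ^ n = 1"
    using n zeta_power_eq_iff[of n n 0] by simp
  also have "\<sigma> 1 = 1"
    using galois by (simp add: galois_cyclo_def)
  finally obtain k where k: "k < n" "\<sigma> (zeta n) = zeta n ^ k"
    using complex_roots_unity[of n] n by (auto simp: zeta_power)
  have "k \<noteq> 0"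
  proof
    assume "k = 0"
    then have "\<sigma> (zeta n) = \<sigma> 1"
      using k galois by (simp add: galois_cyclo_def)
    moreover have "1 \<in> cyclotomic_field n"
      using zeta_power_in_cyclotomic_field[of n 0] n by simp
    moreover have "inj_on \<sigma> (cyclotomic_field n)"
      using galois by (simp add: galois_cyclo_def bij_betw_def)
    ultimately have "zeta n ^ 1 = zeta n ^ 0"
      using zeta_in_cyclotomic_field by (simp add: inj_on_eq_iff)
    then show False
      using n zeta_power_eq_iff[of n 1 0] by simp
  qed
  with k show ?thesis
    by blast
qed

end

section \<open>Weil sums\<close>

lemma bij_power_int:
  assumes "gcd d (int CARD('a::{field,finite}) - 1) = 1" and "d \<noteq> 0"
  shows "bij (\<lambda>x::'a. power_int x d)"
proof -
  obtain u v where uv: "u * d + v * (int CARD('a) - 1) = 1"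
    using bezout_int[of d "int CARD('a) - 1"] assms(1) by auto
  have q: "int CARD('a) - 1 = int (CARD('a) - 1)"
    using finite_UNIV_card_ge_0[where 'a='a] by simp
  have inverse: "power_int (power_int x d) u = x" if "x \<noteq> 0" for x :: 'a
  proof -
    have "x = power_int x (d * u + (int CARD('a) - 1) * v)"
      using uv by (simp add: mult.commute)
    also have "\<dots> = power_int (power_int x d) u * power_int (power_int x (int (CARD('a) - 1))) v"
      unfolding q by (simp only: power_int_add[OF disjI1[OF that]] power_int_mult)
    also have "power_int x (int (CARD('a) - 1)) = 1"
      by (simp only: power_int_of_nat power_card_minus_one_eq_one[OF that])
    finally show ?thesis
      by simp
  qed
  have "inj (\<lambda>x::'a. power_int x d)"
  proof (rule injI)
    fix x y :: 'a
    assume eq: "power_int x d = power_int y d"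
    show "x = y"
    proof (cases "x = 0 \<or> y = 0")
      case True
      then show ?thesis
        using eq assms(2) by auto
    next
      case False
      then show ?thesis
        using inverse eq by metis
    qed
  qed
  then show ?thesis
    by (simp add: bij_def finite_UNIV_inj_surj)
qed

lemma odd_if_coprime_card_minus_one:
  assumes "gcd d (int CARD('a::{field,finite}) - 1) = 1" and "CHAR('a) \<noteq> 2"
  shows "odd d"
proof
  assume "even d"
  have "odd CHAR('a)"
    using CHAR_gt_one[where 'a='a] assms(2) by (intro prime_odd_nat prime_CHAR_finite) auto
  then have "odd CARD('a)"
    by (subst card_eq_CHAR_power) simp
  then have "(2::int) dvd gcd d (int CARD('a) - 1)"
    using \<open>even d\<close> by (intro gcd_greatest) auto
  with assms(1) show False
    by simp
qed

text \<open>The image of \<open>W\<^sub>K\<^sub>,\<^sub>d(a)\<close> under the automorphism \<open>\<zeta>\<^sub>p \<mapsto> \<zeta>\<^sub>p\<^sup>k\<close>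
  is \<open>scaled_weil_sum (of_nat k) d a\<close>.\<close>

definition scaled_weil_sum :: "'a::{field,finite} \<Rightarrow> int \<Rightarrow> 'a \<Rightarrow> complex" where
  "scaled_weil_sum c d a = (\<Sum>x\<in>UNIV. psi (c * (power_int x d + a * x)))"

lemma galois_cyclo_psi:
  assumes "galois_cyclo CHAR('a) \<sigma>" and "\<sigma> (zeta CHAR('a)) = zeta CHAR('a) ^ k"
  shows "\<sigma> (psi x) = psi (of_nat k * (x::'a::{field,finite}))"
proof -
  have "\<sigma> (psi x) = \<sigma> (zeta CHAR('a)) ^ trace_nat x"
    using galois_cyclo_zeta_power[OF assms(1) CHAR_gt_one] by (simp add: psi_eq_zeta_power)
  also have "\<dots> = psi x ^ k"
    by (simp add: assms(2) psi_eq_zeta_power power_mult[symmetric] mult.commute)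
  finally show ?thesis
    by (simp add: psi_of_nat_mult)
qed

lemma galois_cyclo_weil_sum:
  assumes "galois_cyclo CHAR('a) \<sigma>" and "\<sigma> (zeta CHAR('a)) = zeta CHAR('a) ^ k"
  shows "\<sigma> (weil_sum d a) = scaled_weil_sum (of_nat k) d (a::'a::{field,finite})"
proof -
  have "psi x \<in> cyclotomic_field CHAR('a)" for x :: 'a
    using CHAR_gt_one[where 'a='a] by (simp add: psi_eq_zeta_power zeta_power_in_cyclotomic_field)
  then show ?thesis
    unfolding weil_sum_def scaled_weil_sum_def
    by (simp add: galois_cyclo_sum[OF assms(1) CHAR_gt_one] galois_cyclo_psi[OF assms])
qed

lemma scaled_weil_sum_eq_weil_sum:
  assumes "c \<noteq> 0" and "power_int c d = c"
  shows "scaled_weil_sum c d a = weil_sum d (a::'a::{field,finite})"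
proof -
  have "scaled_weil_sum c d a = (\<Sum>x\<in>UNIV. psi (power_int (c * x) d + a * (c * x)))"
    unfolding scaled_weil_sum_def
    by (intro sum.cong refl) (simp add: power_int_mult_distrib assms(2) algebra_simps)
  also have "\<dots> = weil_sum d a"
    unfolding weil_sum_def
    by (rule sum.reindex_bij_witness[of _ "\<lambda>x. x / c" "\<lambda>x. c * x"]) (use assms(1) in auto)
  finally show ?thesis .
qed

lemma weil_sum_zero:
  assumes "bij (\<lambda>x::'a::{field,finite}. power_int x d)"
  shows "weil_sum d (0::'a) = 0"
  using sum.reindex_bij_betw[OF assms, of psi] by (simp add: weil_sum_def sum_psi)

lemma sum_weil_sum_mult_scaled_weil_sum:
  fixes c :: "'a::{field,finite}"
  assumes "odd d"
  shows "(\<Sum>a\<in>UNIV. weil_sum d a * scaled_weil_sum c d a)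
    = of_nat CARD('a) * (\<Sum>y\<in>UNIV. psi ((c - power_int c d) * power_int y d))"
proof -
  define f where "f x y = psi (power_int x d + c * power_int y d)" for x y :: 'a
  have "(\<Sum>a\<in>UNIV. weil_sum d a * scaled_weil_sum c d a)
      = (\<Sum>a\<in>UNIV. \<Sum>x\<in>UNIV. \<Sum>y\<in>UNIV. f x y * psi (a * (x + c * y)))"
    unfolding weil_sum_def scaled_weil_sum_def sum_product f_def
    by (intro sum.cong refl) (simp add: psi_add[symmetric] algebra_simps)
  also have "\<dots> = (\<Sum>x\<in>UNIV. \<Sum>a\<in>UNIV. \<Sum>y\<in>UNIV. f x y * psi (a * (x + c * y)))"
    by (rule sum.swap)
  also have "\<dots> = (\<Sum>x\<in>UNIV. \<Sum>y\<in>UNIV. f x y * (\<Sum>a\<in>UNIV. psi (a * (x + c * y))))"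
    by (simp only: sum_distrib_left) (intro sum.cong refl sum.swap)
  also have "\<dots> = (\<Sum>y\<in>UNIV. \<Sum>x\<in>UNIV. f x y * (\<Sum>a\<in>UNIV. psi (a * (x + c * y))))"
    by (rule sum.swap)
  also have "\<dots> = (\<Sum>y\<in>UNIV. \<Sum>x\<in>UNIV. if x = - (c * y) then f x y * of_nat CARD('a) else 0)"
    by (intro sum.cong refl) (auto simp: sum_psi_mult eq_neg_iff_add_eq_0)
  also have "\<dots> = (\<Sum>y\<in>UNIV. f (- (c * y)) y * of_nat CARD('a))"
    by simp
  also have "\<dots> = of_nat CARD('a) * (\<Sum>y\<in>UNIV. psi ((c - power_int c d) * power_int y d))"
    unfolding f_def using assms
    by (simp add: sum_distrib_left power_int_mult_distrib algebra_simps)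
  finally show ?thesis .
qed
lemma sum_weil_sum_mult_scaled_weil_sum_eq_zero:
  fixes c :: "'a::{field,finite}"
  assumes "bij (\<lambda>x::'a. power_int x d)" and "odd d" and "power_int c d \<noteq> c"
  shows "(\<Sum>a\<in>UNIV. weil_sum d a * scaled_weil_sum c d a) = 0"
proof -
  have "(\<Sum>y\<in>UNIV. psi ((c - power_int c d) * power_int y d)) = (\<Sum>y\<in>UNIV. psi ((c - power_int c d) * y))"
    by (rule sum.reindex_bij_betw[OF assms(1)])
  also have "\<dots> = 0"
    using assms(3) sum_psi_mult[of "c - power_int c d"] by (simp add: mult.commute)
  finally show ?thesis
    by (simp add: sum_weil_sum_mult_scaled_weil_sum[OF assms(2)])
qed

theorem corollary5p7:
  fixes d :: int and \<sigma> :: "complex \<Rightarrow> complex"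
  assumes "gcd d (int CARD('a::{field,finite}) - 1) = 1"
    and "galois_cyclo CHAR('a) \<sigma>"
    and "\<exists>a::'a. a \<noteq> 0 \<and> \<sigma> (weil_sum d a) \<noteq> weil_sum d a"
  shows "(\<Sum>a\<in>UNIV - {0::'a}. weil_sum d a * \<sigma> (weil_sum d a)) = 0"
proof -
  obtain k where k: "0 < k" "k < CHAR('a)" "\<sigma> (zeta CHAR('a)) = zeta CHAR('a) ^ k"
    using galois_cyclo_zeta_eq_power[OF assms(2) CHAR_gt_one] by blast
  define c :: 'a where "c = of_nat k"
  have "c \<noteq> 0"
    using k by (auto simp: c_def of_nat_eq_0_iff_char_dvd dest: dvd_imp_le)
  have \<sigma>_weil_sum: "\<sigma> (weil_sum d a) = scaled_weil_sum c d a" for a :: 'a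
    unfolding c_def by (rule galois_cyclo_weil_sum[OF assms(2) k(3)])
  then have c: "power_int c d \<noteq> c"
    using assms(3) scaled_weil_sum_eq_weil_sum[OF \<open>c \<noteq> 0\<close>] by metis
  have "CHAR('a) \<noteq> 2"
  proof
    assume "CHAR('a) = 2"
    with k have "k = 1"
      by simp
    then have "c = 1"
      by (simp add: c_def)
    with c show False
      by simp
  qed
  then have "odd d"
    by (rule odd_if_coprime_card_minus_one[OF assms(1)])
  then have bij: "bij (\<lambda>x::'a. power_int x d)"
    using bij_power_int[OF assms(1)] by auto
  have "(\<Sum>a\<in>UNIV. weil_sum d (a::'a) * \<sigma> (weil_sum d a)) = 0"
    unfolding \<sigma>_weil_sum by (rule sum_weil_sum_mult_scaled_weil_sum_eq_zero[OF bij \<open>odd d\<close> c])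
  then show ?thesis
    by (simp add: sum.remove[of UNIV 0] weil_sum_zero[OF bij])
qed

end
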